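(* Let $a_0\geq1$ and $a_1,a_2,\dots$ be positive integers such that $a_{2k}\leq 3a_0-2$ for all $k\geq1$. Let $\ell=[a_0;a_1,a_2,\dots]$ (an irrational number) and $\theta=e^{2/\ell}$. Then $\mathcal A_\theta=\emptyset$.
   Context: $\lfloor x\rfloor$ is the floor of $x$; $\log$ is the natural logarithm. For real $\theta>1$ and positive integer $n$, $M'_\theta(n)=\left\lfloor 1/(\theta^{1/n}-1)\right\rfloor$, and $\mathcal A_\theta=\{n\in\mathbb N: M'_\theta(n)\neq \lfloor n/\log\theta-1/2\rfloor\}$, where $\mathbb N$ is the set of positive integers. $[a_0;a_1,a_2,\dots]$ denotes an infinite simple continued fraction. *)

theory Defs
  imports Complex_Main
begin

text \<open>Finite continued fraction [a_k; a_(k+1), ..., a_(k+n)].\<close>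
fun cf_aux :: "(nat \<Rightarrow> nat) \<Rightarrow> nat \<Rightarrow> nat \<Rightarrow> real" where
  "cf_aux a k 0 = real (a k)"
| "cf_aux a k (Suc n) = real (a k) + 1 / cf_aux a (Suc k) n"

definition cf_conv :: "(nat \<Rightarrow> nat) \<Rightarrow> nat \<Rightarrow> real" where
  "cf_conv a n = cf_aux a 0 n"

definition cfrac_value :: "(nat \<Rightarrow> nat) \<Rightarrow> real" where
  "cfrac_value a = lim (cf_conv a)"

definition M' :: "real \<Rightarrow> nat \<Rightarrow> int" where
  "M' \<theta> n = \<lfloor>1 / (\<theta> powr (1 / real n) - 1)\<rfloor>"

definition A_set :: "real \<Rightarrow> nat set" where
  "A_set \<theta> = {n. n \<ge> 1 \<and> M' \<theta> n \<noteq> \<lfloor>real n / ln \<theta> - 1/2\<rfloor>}"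

end

theory Submission
  imports Defs
begin

(* Write l = [a_0; a_1, a_2, ...] and xi_j = [a_j; a_(j+1), ...] for its complete quotients,
   so that xi_j = a_j + 1/xi_(j+1) and a_j <= xi_j <= a_j + 1.

   Put u = 2/(l n).  Then theta^(1/n) = e^u and n / ln theta = 1/u, and the Pade-type bounds
   1/u - 1/2 <= 1/(e^u - 1) <= 1/u - 1/2 + u/12 show that n lies in A_theta only if some
   integer lies in the interval (1/u - 1/2, 1/u - 1/2 + u/12]; doubling it and adding one gives
   an integer q with  0 < q - n l  and  n (q - n l) <= 1/(3 l) < 1/(3 a_0).

   The arithmetic heart is a lower bound for approximations from above of even complete
   quotients: if every xi_(2k) with k >= 1 is at most C - 1, where C >= 2, then
   n (q - n xi_(2k)) >= 1/C whenever q > n xi_(2k).  It is proved by strong induction on n: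
   two steps of the continued fraction expansion turn (n, q) into a smaller pair (r, m)
   approximating xi_(2k+2) from above, unless r <= 0, where the bound is checked directly.
   The hypothesis a_(2k) <= 3 a_0 - 2 gives exactly C = 3 a_0, contradicting the above. *)


section \<open>Convergence of continued fractions with positive partial quotients\<close>

lemma cf_aux_bounds:
  assumes pos: "\<And>i. b i \<ge> (1::nat)"
  shows "real (b k) \<le> cf_aux b k n \<and> cf_aux b k n \<le> real (b k) + 1"
proof (induction n arbitrary: k)
  case 0
  then show ?case by simp
next
  case (Suc n)
  have "cf_aux b (Suc k) n \<ge> 1" using Suc[of "Suc k"] pos[of "Suc k"] by linarith
  then have "0 < 1 / cf_aux b (Suc k) n" "1 / cf_aux b (Suc k) n \<le> 1" by auto
  then show ?case by simp
qed

lemma two_step_contraction: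
  fixes c x y :: real
  assumes c: "c \<ge> 1" and x: "x \<ge> 1" and y: "y \<ge> 1"
  shows "\<bar>1 / (c + 1/x) - 1 / (c + 1/y)\<bar> \<le> \<bar>x - y\<bar> / 4"
proof -
  have "1 * 1 \<le> c * x" "1 * 1 \<le> c * y" using c x y by (intro mult_mono; simp)+
  then have cx: "c * x + 1 \<ge> 2" and cy: "c * y + 1 \<ge> 2" by simp_all
  have "1 / (c + 1/x) - 1 / (c + 1/y) = (x - y) / ((c * x + 1) * (c * y + 1))"
    using x y cx cy by (simp add: field_simps)
  moreover have D: "(c * x + 1) * (c * y + 1) \<ge> 2 * 2"
    using cx cy by (intro mult_mono) auto
  moreover have "\<bar>x - y\<bar> / ((c * x + 1) * (c * y + 1)) \<le> \<bar>x - y\<bar> / 4"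
    using D by (intro divide_left_mono) auto
  ultimately show ?thesis by (simp add: abs_divide)
qed

lemma cf_aux_cauchy:
  assumes pos: "\<And>i. b i \<ge> (1::nat)"
  shows "\<bar>cf_aux b k (2*m + i) - cf_aux b k (2*m + j)\<bar> \<le> (1/4) ^ m"
proof (induction m arbitrary: k)
  case 0
  then show ?case
    using cf_aux_bounds[of b k i, OF pos] cf_aux_bounds[of b k j, OF pos] by (simp add: abs_le_iff)
next
  case (Suc m)
  define x where "x = cf_aux b (Suc (Suc k)) (2*m + i)"
  define y where "y = cf_aux b (Suc (Suc k)) (2*m + j)"
  have x1: "x \<ge> 1" and y1: "y \<ge> 1"
    using cf_aux_bounds[of b "Suc (Suc k)", OF pos] pos[of "Suc (Suc k)"]
    unfolding x_def y_def by (metis of_nat_1 of_nat_le_iff order_trans)+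
  have c1: "real (b (Suc k)) \<ge> 1" using pos[of "Suc k"] by simp
  have "2 * Suc m + i = Suc (Suc (2*m + i))" "2 * Suc m + j = Suc (Suc (2*m + j))" by simp_all
  then have "cf_aux b k (2 * Suc m + i) - cf_aux b k (2 * Suc m + j)
      = 1 / (real (b (Suc k)) + 1/x) - 1 / (real (b (Suc k)) + 1/y)"
    by (simp add: x_def y_def)
  also have "\<bar>\<dots>\<bar> \<le> \<bar>x - y\<bar> / 4" by (rule two_step_contraction[OF c1 x1 y1])
  also have "\<dots> \<le> (1/4) ^ Suc m" using Suc[of "Suc (Suc k)"] by (simp add: x_def y_def)
  finally show ?case .
qed

lemma cf_conv_convergent:
  assumes pos: "\<And>i. b i \<ge> (1::nat)"
  shows "cf_conv b \<longlonglongrightarrow> cfrac_value b"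
proof -
  have "Cauchy (cf_conv b)"
    unfolding Cauchy_def
  proof (intro allI impI)
    fix e :: real
    assume "e > 0"
    then obtain m where m: "(1/4::real) ^ m < e" using real_arch_pow_inv[of e "1/4"] by auto
    show "\<exists>M. \<forall>p\<ge>M. \<forall>q\<ge>M. dist (cf_conv b p) (cf_conv b q) < e"
    proof (intro exI allI impI)
      fix p q
      assume "p \<ge> 2*m" "q \<ge> 2*m"
      then have "p = 2*m + (p - 2*m)" "q = 2*m + (q - 2*m)" by auto
      then have "dist (cf_conv b p) (cf_conv b q) \<le> (1/4) ^ m"
        using cf_aux_cauchy[of b 0 m "p - 2*m" "q - 2*m", OF pos]
        unfolding cf_conv_def dist_real_def by metis
      then show "dist (cf_conv b p) (cf_conv b q) < e" using m by linarith
    qed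
  qed
  then show ?thesis
    unfolding cfrac_value_def using Cauchy_convergent_iff convergent_LIMSEQ_iff by blast
qed

lemma cfrac_value_ge:
  assumes pos: "\<And>i. b i \<ge> (1::nat)"
  shows "cfrac_value b \<ge> real (b 0)"
  by (rule LIMSEQ_le_const[OF cf_conv_convergent[OF pos]])
     (use cf_aux_bounds[of b 0, OF pos] in \<open>auto simp: cf_conv_def\<close>)

lemma cf_aux_shift: "cf_aux b (Suc k) n = cf_aux (\<lambda>i. b (Suc i)) k n"
  by (induction n arbitrary: k) auto

lemma cfrac_value_rec:
  assumes pos: "\<And>i. b i \<ge> (1::nat)"
  shows "cfrac_value b = real (b 0) + 1 / cfrac_value (\<lambda>i. b (Suc i))"
proof -
  let ?b' = "\<lambda>i. b (Suc i)"
  have pos': "\<And>i. ?b' i \<ge> 1" using pos by simp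
  have tail1: "cfrac_value ?b' \<ge> 1" using cfrac_value_ge[of ?b', OF pos'] pos[of 1] by simp
  have "(\<lambda>m. real (b 0) + 1 / cf_conv ?b' m) \<longlonglongrightarrow> real (b 0) + 1 / cfrac_value ?b'"
    using tail1 by (intro tendsto_intros cf_conv_convergent[OF pos']) auto
  moreover have "(\<lambda>m. real (b 0) + 1 / cf_conv ?b' m) = (\<lambda>m. cf_conv b (Suc m))"
    by (auto simp: cf_conv_def cf_aux_shift)
  moreover have "(\<lambda>m. cf_conv b (Suc m)) \<longlonglongrightarrow> cfrac_value b"
    by (rule LIMSEQ_Suc[OF cf_conv_convergent[OF pos]])
  ultimately show ?thesis using LIMSEQ_unique by metis
qed


section \<open>Complete quotients\<close>

definition cf_tail :: "(nat \<Rightarrow> nat) \<Rightarrow> nat \<Rightarrow> real" where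
  "cf_tail a j = cfrac_value (\<lambda>i. a (i + j))"

lemma cf_tail_0: "cf_tail a 0 = cfrac_value a"
  by (simp add: cf_tail_def)

lemma cf_tail_rec:
  assumes pos: "\<And>i. a i \<ge> (1::nat)"
  shows "cf_tail a j = real (a j) + 1 / cf_tail a (Suc j)"
  using cfrac_value_rec[of "\<lambda>i. a (i + j)"] pos by (simp add: cf_tail_def)

lemma cf_tail_ge:
  assumes pos: "\<And>i. a i \<ge> (1::nat)"
  shows "real (a j) \<le> cf_tail a j"
  using cfrac_value_ge[of "\<lambda>i. a (i + j)"] pos by (simp add: cf_tail_def)

lemma cf_tail_ge1:
  assumes pos: "\<And>i. a i \<ge> (1::nat)"
  shows "1 \<le> cf_tail a j"
  using cf_tail_ge[of a j, OF pos] pos[of j] by linarith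

lemma cf_tail_le:
  assumes pos: "\<And>i. a i \<ge> (1::nat)"
  shows "cf_tail a j \<le> real (a j) + 1"
proof -
  have "1 / cf_tail a (Suc j) \<le> 1" using cf_tail_ge1[of a "Suc j", OF pos] by simp
  then show ?thesis using cf_tail_rec[of a j, OF pos] by linarith
qed


section \<open>Approximations from above of even complete quotients\<close>

text \<open>Two steps of the expansion X = A0 + 1/Y, Y = A1 + 1/Z transform an approximation q/N of X
  into the approximation m/r of Z, with m = q - A0 N and r = N - A1 m; the errors are related
  by q - N X = (m - r Z)/(A1 Z + 1).\<close>
lemma two_step_error:
  fixes X Y Z A0 A1 N q m r :: real
  assumes X: "X = A0 + 1/Y" and Y: "Y = A1 + 1/Z"
    and Z: "Z > 0" and A1: "A1 \<ge> 0"
    and m: "m = q - A0 * N" and r: "r = N - A1 * m"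
  shows "q - N * X = m - N / Y"
    and "q - N * X = (m - r * Z) / (A1 * Z + 1)"
    and "N = A1 * (m - r * Z) + r * (A1 * Z + 1)"
proof -
  have P: "A1 * Z + 1 > 0" using mult_nonneg_nonneg[OF A1, of Z] Z by linarith
  have YZ: "Y = (A1 * Z + 1) / Z" using Y Z by (simp add: field_simps)
  show "q - N * X = m - N / Y" using X m by (simp add: algebra_simps)
  also have "\<dots> = (m - r * Z) / (A1 * Z + 1)"
    using P Z unfolding YZ r by (simp add: field_simps)
  finally show "q - N * X = (m - r * Z) / (A1 * Z + 1)" .
  show "N = A1 * (m - r * Z) + r * (A1 * Z + 1)" using r by (simp add: algebra_simps)
qed

text \<open>The terminal case r = 0 of the descent: then N = A1 m and N(q - N X) \<ge> 1/(Z + 1).\<close>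
lemma descent_end_exact:
  fixes A1 Z m :: real
  assumes A1: "A1 \<ge> 1" and Z: "Z \<ge> 1" and m: "m \<ge> 1"
  shows "1 / (Z + 1) \<le> (A1 * m) * m / (A1 * Z + 1)"
proof -
  have P: "A1 * Z + 1 > 0" using A1 Z by (simp add: add_pos_pos)
  have "1 / (Z + 1) \<le> A1 / (A1 * Z + 1)"
    using A1 Z P by (simp add: divide_simps algebra_simps)
  also have "\<dots> \<le> (A1 * m) * m / (A1 * Z + 1)"
    using A1 m P by (intro divide_right_mono) (simp_all add: one_le_power power2_eq_square[symmetric]
        mult.assoc mult_le_cancel_left1)
  finally show ?thesis .
qed

text \<open>The terminal case r = -s < 0 of the descent: then N(q - N X) \<ge> 1/2.\<close>
lemma descent_end_overshoot:
  fixes A1 Z N m s :: real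
  assumes A1: "A1 \<ge> 1" and Z: "Z \<ge> 1" and N: "N \<ge> 1" and m: "m \<ge> 1" and s: "s \<ge> 1"
    and Ns: "N = A1 * m - s"
  shows "1/2 \<le> N * ((m + s * Z) / (A1 * Z + 1))"
proof -
  have P: "A1 * Z + 1 > 0" using A1 Z by (simp add: add_pos_pos)
  have "A1 \<le> A1 * m" using A1 m by (simp add: mult_le_cancel_left1)
  then have "A1 * Z \<le> (N + s) * Z" using Ns Z by (intro mult_right_mono) auto
  moreover have "N * 1 \<le> N * s" "1 * s \<le> N * s" using N s by (intro mult_mono; simp)+
  then have "N + s \<le> 2 * N * s" by simp
  then have "(N + s) * Z \<le> 2 * N * s * Z" using Z by (intro mult_right_mono) auto
  moreover have "1 * 1 \<le> N * m" using N m by (intro mult_mono; simp)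
  then have "1 \<le> 2 * N * m" by simp
  ultimately have "A1 * Z + 1 \<le> 2 * N * (m + s * Z)" by (simp add: algebra_simps)
  then show ?thesis using P by (simp add: divide_simps)
qed

text \<open>The continuation case r > 0 of the descent: the bound c \<le> r e for the reduced
  approximation m/r (whose error is e = m - r Z) carries over to the original one.\<close>
lemma descent_continue:
  fixes A1 Z r e c :: real
  assumes A1: "A1 \<ge> 0" and Z: "Z \<ge> 0" and reduced: "c \<le> r * e"
  shows "c \<le> (A1 * e + r * (A1 * Z + 1)) * (e / (A1 * Z + 1))"
proof -
  have P: "A1 * Z + 1 > 0" using mult_nonneg_nonneg[OF A1 Z] by linarith
  have "(A1 * e + r * (A1 * Z + 1)) * (e / (A1 * Z + 1)) = r * e + A1 * e\<^sup>2 / (A1 * Z + 1)"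
    using P by (simp add: field_simps power2_eq_square)
  moreover have "0 \<le> A1 * e\<^sup>2 / (A1 * Z + 1)" using A1 P by simp
  ultimately show ?thesis using reduced by simp
qed

lemma complete_quotient_two_steps:
  assumes pos: "\<And>i. a i \<ge> (1::nat)" and n: "n \<ge> 1"
    and above: "real n * cf_tail a j < real_of_int q"
    and m_def: "m = q - int (a j) * int n" and r_def: "r = int n - int (a (Suc j)) * m"
  shows "m \<ge> 1"
    and "real_of_int q - real n * cf_tail a j
           = (of_int m - of_int r * cf_tail a (Suc (Suc j)))
             / (real (a (Suc j)) * cf_tail a (Suc (Suc j)) + 1)" (is ?error)
    and "real n = real (a (Suc j)) * (of_int m - of_int r * cf_tail a (Suc (Suc j)))
           + of_int r * (real (a (Suc j)) * cf_tail a (Suc (Suc j)) + 1)" (is ?size)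
proof -
  have X: "cf_tail a j = a j + 1 / cf_tail a (Suc j)" by (rule cf_tail_rec[OF pos])
  have Y: "cf_tail a (Suc j) = a (Suc j) + 1 / cf_tail a (Suc (Suc j))" by (rule cf_tail_rec[OF pos])
  have Z: "cf_tail a (Suc (Suc j)) > 0" using cf_tail_ge1[of a "Suc (Suc j)", OF pos] by simp
  have m_eq: "real_of_int m = of_int q - real (a j) * real n" unfolding m_def by simp
  have r_eq: "real_of_int r = real n - real (a (Suc j)) * of_int m" unfolding r_def by simp
  note err = two_step_error[OF X Y Z _ m_eq r_eq]
  show ?error and ?size using err(2,3) by simp_all
  have "0 < of_int m - real n / cf_tail a (Suc j)" using err(1) above by simp
  moreover have "real n / cf_tail a (Suc j) > 0" using n cf_tail_ge1[of a "Suc j", OF pos] by simp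
  ultimately show "m \<ge> 1" by linarith
qed

text \<open>The proof is a descent on n via the two-step reduction;
  the cases r = 0 and r < 0 end the descent.\<close>
lemma even_tail_approximation:
  assumes pos: "\<And>i. a i \<ge> (1::nat)" and C: "C \<ge> 2"
    and tails: "\<And>k. cf_tail a (2 * Suc k) + 1 \<le> C"
  shows "n \<ge> 1 \<Longrightarrow> real n * cf_tail a (2*k) < real_of_int q \<Longrightarrow>
    1 / C \<le> real n * (real_of_int q - real n * cf_tail a (2*k))"
proof (induction n arbitrary: k q rule: less_induct)
  case (less n)
  define Z where "Z = cf_tail a (2 * Suc k)"
  define A1 where "A1 = real (a (Suc (2*k)))"
  define m where "m = q - int (a (2*k)) * int n"
  define r where "r = int n - int (a (Suc (2*k))) * m"
  note reduction = complete_quotient_two_steps[OF pos less.prems m_def r_def]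
  have m1: "m \<ge> 1" by (rule reduction(1))
  have d: "of_int q - real n * cf_tail a (2*k) = (of_int m - of_int r * Z) / (A1 * Z + 1)"
    and N_eq: "real n = A1 * (of_int m - of_int r * Z) + of_int r * (A1 * Z + 1)"
    using reduction(2,3) unfolding Z_def A1_def by simp_all
  have A1_ge: "A1 \<ge> 1" unfolding A1_def using pos by (simp add: Suc_le_eq)
  have Z1: "Z \<ge> 1" unfolding Z_def by (rule cf_tail_ge1[OF pos])
  have "1 / C \<le> real n * ((of_int m - of_int r * Z) / (A1 * Z + 1))"
  proof (cases r "0::int" rule: linorder_cases)
    case greater
    have P: "A1 * Z + 1 > 0" using A1_ge Z1 by (simp add: add_pos_pos)
    have "0 < (of_int m - of_int r * Z) / (A1 * Z + 1)" using d less.prems(2) by linarith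
    then have reduced_above: "real (nat r) * Z < of_int m"
      using P greater by (simp add: zero_less_divide_iff)
    have "1 * 1 \<le> A1 * of_int m" using A1_ge m1 by (intro mult_mono; simp)
    moreover have "real_of_int r = real n - A1 * of_int m" by (simp add: r_def A1_def)
    ultimately have "real_of_int r < real_of_int (int n)" by simp
    then have smaller: "nat r < n" using greater by (simp only: of_int_less_iff nat_less_iff)
    have "1 / C \<le> of_int r * (of_int m - of_int r * Z)"
      using less.IH[OF smaller _ reduced_above[unfolded Z_def]] greater unfolding Z_def by simp
    then show ?thesis
      unfolding N_eq by (rule descent_continue[rotated 2]) (use A1_ge Z1 in simp_all)
  next
    case equal
    have "1 / C \<le> 1 / (Z + 1)"
      using tails[of k] Z1 unfolding Z_def by (simp add: frac_le)
    also have "\<dots> \<le> (A1 * of_int m) * of_int m / (A1 * Z + 1)"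
      by (rule descent_end_exact[OF A1_ge Z1]) (use m1 in simp)
    finally show ?thesis using equal N_eq by simp
  next
    case less
    have "1 / C \<le> 1 / 2" using C by (simp add: frac_le)
    also have "\<dots> \<le> real n * ((of_int m + of_int (- r) * Z) / (A1 * Z + 1))"
      by (rule descent_end_overshoot[OF A1_ge Z1])
         (use m1 less N_eq \<open>n \<ge> 1\<close> in \<open>simp_all add: algebra_simps\<close>)
    finally show ?thesis by simp
  qed
  then show ?case using d by simp
qed


section \<open>Estimates for 1/(e^u - 1)\<close>

lemma nonneg_from_derivative:
  fixes f f' :: "real \<Rightarrow> real"
  assumes "\<And>x. (f has_real_derivative f' x) (at x)" "\<And>x. x \<ge> 0 \<Longrightarrow> f' x \<ge> 0"
    and "f 0 = 0" "u \<ge> 0"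
  shows "f u \<ge> 0"
  using DERIV_nonneg_imp_nondecreasing[of 0 u f] assms by force

text \<open>The (1,1) Pade approximant (2 + u)/(2 - u) bounds e^u from above.\<close>
lemma exp_pade_lower:
  fixes u :: real
  assumes u: "u \<ge> 0"
  shows "(2 - u) * exp u \<le> 2 + u"
proof -
  have deriv_nonneg: "1 + (x - 1) * exp x \<ge> 0" if "x \<ge> 0" for x :: real
    by (rule nonneg_from_derivative[where f = "\<lambda>x. 1 + (x - 1) * exp x"
          and f' = "\<lambda>x. x * exp x"])
       (fastforce intro!: derivative_eq_intros simp: algebra_simps, simp, simp, use that in simp)
  have "2 + u - (2 - u) * exp u \<ge> 0"
    by (rule nonneg_from_derivative[where f = "\<lambda>x. 2 + x - (2 - x) * exp x"
          and f' = "\<lambda>x. 1 + (x - 1) * exp x"])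
       (fastforce intro!: derivative_eq_intros simp: algebra_simps,
        use deriv_nonneg in blast, simp, use u in simp)
  then show ?thesis by simp
qed

text \<open>The (2,2) Pade approximant (12 + 6u + u^2)/(12 - 6u + u^2) bounds e^u from below;
  three differentiations reduce this to e^x x^2 \<ge> 0.\<close>
lemma exp_pade_upper:
  fixes u :: real
  assumes u: "u \<ge> 0"
  shows "u^2 + 6*u + 12 \<le> exp u * (u^2 - 6*u + 12)"
proof -
  have third: "exp x * (x^2 - 2*x + 2) - 2 \<ge> 0" if "x \<ge> 0" for x :: real
    by (rule nonneg_from_derivative[where f = "\<lambda>x. exp x * (x^2 - 2*x + 2) - 2"
          and f' = "\<lambda>x. exp x * x^2"])
       (fastforce intro!: derivative_eq_intros simp: algebra_simps power2_eq_square,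
        simp, simp, use that in simp)
  have second: "exp x * (x^2 - 4*x + 6) - 2*x - 6 \<ge> 0" if "x \<ge> 0" for x :: real
    by (rule nonneg_from_derivative[where f = "\<lambda>x. exp x * (x^2 - 4*x + 6) - 2*x - 6"
          and f' = "\<lambda>x. exp x * (x^2 - 2*x + 2) - 2"])
       (fastforce intro!: derivative_eq_intros simp: algebra_simps power2_eq_square,
        use third in blast, simp, use that in simp)
  have "exp u * (u^2 - 6*u + 12) - (u^2 + 6*u + 12) \<ge> 0"
    by (rule nonneg_from_derivative[where f = "\<lambda>x. exp x * (x^2 - 6*x + 12) - (x^2 + 6*x + 12)"
          and f' = "\<lambda>x. exp x * (x^2 - 4*x + 6) - 2*x - 6"])
       (fastforce intro!: derivative_eq_intros simp: algebra_simps power2_eq_square,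
        use second in blast, simp, use u in simp)
  then show ?thesis by simp
qed

lemma reciprocal_expm1_bounds:
  fixes u :: real
  assumes u: "u > 0"
  shows "1/u - 1/2 \<le> 1 / (exp u - 1)" and "1 / (exp u - 1) \<le> 1/u - 1/2 + u/12"
proof -
  have E: "exp u - 1 > 0" using u by simp
  have "(2 - u) * (exp u - 1) \<le> 2 * u"
    using exp_pade_lower[of u] u by (simp add: algebra_simps)
  then have "(2 - u) / (2 * u) \<le> 1 / (exp u - 1)"
    using E u by (simp add: divide_simps mult.commute)
  moreover have "1/u - 1/2 = (2 - u) / (2 * u)" using u by (simp add: field_simps)
  ultimately show "1/u - 1/2 \<le> 1 / (exp u - 1)" by simp
  have "12 * u \<le> (exp u - 1) * (u^2 - 6*u + 12)"
    using exp_pade_upper[of u] u by (simp add: algebra_simps)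
  then have "1 / (exp u - 1) \<le> (u^2 - 6*u + 12) / (12 * u)"
    using E u by (simp add: divide_simps mult.commute)
  moreover have "1/u - 1/2 + u/12 = (u^2 - 6*u + 12) / (12 * u)"
    using u by (simp add: field_simps power2_eq_square)
  ultimately show "1 / (exp u - 1) \<le> 1/u - 1/2 + u/12" by simp
qed


section \<open>Elements of A_\<theta> yield good approximations of l from above\<close>

text \<open>If the floors of 1/(e^u - 1) and 1/u - 1/2 differ, an integer separates them, and
  doubling it produces an integer just above 2/u.\<close>
lemma integer_above_2_div:
  fixes u :: real
  assumes u: "u > 0" and floors: "\<lfloor>1 / (exp u - 1)\<rfloor> \<noteq> \<lfloor>1/u - 1/2\<rfloor>"
  shows "\<exists>q::int. 2/u < q \<and> q \<le> 2/u + u/6"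
proof -
  note bounds = reciprocal_expm1_bounds[OF u]
  have "\<lfloor>1/u - 1/2\<rfloor> < \<lfloor>1 / (exp u - 1)\<rfloor>"
    using floors floor_mono[OF bounds(1)] by simp
  then have above: "1/u - 1/2 < of_int \<lfloor>1 / (exp u - 1)\<rfloor>" by linarith
  have below: "of_int \<lfloor>1 / (exp u - 1)\<rfloor> \<le> 1/u - 1/2 + u/12" using bounds(2) by linarith
  show ?thesis
    by (rule exI[of _ "2 * \<lfloor>1 / (exp u - 1)\<rfloor> + 1"]) (use above below in simp)
qed

lemma A_set_approximation:
  fixes l :: real
  assumes l: "l > 0" and n: "n \<in> A_set (exp (2 / l))"
  shows "\<exists>q::int. real n * l < q \<and> real n * (q - real n * l) \<le> 1 / (3 * l)"
proof -
  define u where "u = 2 / (l * real n)"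
  have n1: "real n \<ge> 1" using n by (simp add: A_set_def)
  have u: "u > 0" using l n1 by (simp add: u_def)
  have "exp (2 / l) powr (1 / real n) = exp u" by (simp add: exp_powr_real u_def)
  moreover have "real n / ln (exp (2 / l)) = 1 / u" by (simp add: u_def)
  ultimately have "\<lfloor>1 / (exp u - 1)\<rfloor> \<noteq> \<lfloor>1/u - 1/2\<rfloor>"
    using n by (simp add: A_set_def M'_def)
  then obtain q :: int where q: "2/u < q" "q \<le> 2/u + u/6" using integer_above_2_div[OF u] by blast
  have nl: "2/u = real n * l" using l n1 by (simp add: u_def)
  have "real n * (q - real n * l) \<le> real n * (u/6)"
    using q(2) n1 unfolding nl by (intro mult_left_mono) auto
  also have "\<dots> = 1 / (3 * l)" using l n1 by (simp add: u_def)
  finally show ?thesis using q(1) unfolding nl by blast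
qed


theorem mainTheorem6:
  fixes a :: "nat \<Rightarrow> nat" and l \<theta> :: real
  assumes "a 0 \<ge> 1"
    and "\<And>k. k \<ge> 1 \<Longrightarrow> a k > 0"
    and "\<And>k. k \<ge> 1 \<Longrightarrow> a (2 * k) \<le> 3 * a 0 - 2"
    and "l = cfrac_value a"
    and "\<theta> = exp (2 / l)"
  shows "A_set \<theta> = {}"
proof -
  have pos: "a i \<ge> 1" for i using assms(1) assms(2)[of i] by (cases "i = 0") auto
  have tails: "cf_tail a (2 * Suc k) + 1 \<le> 3 * real (a 0)" for k
    using cf_tail_le[of a "2 * Suc k", OF pos] assms(1) assms(3)[of "Suc k"] by linarith
  have l_eq: "l = real (a 0) + 1 / cf_tail a 1"
    using cf_tail_rec[of a 0, OF pos] by (simp add: assms(4) cf_tail_0)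
  then have l_gt: "l > real (a 0)" using cf_tail_ge1[of a 1, OF pos] by simp
  have a0: "real (a 0) \<ge> 1" using assms(1) by simp
  show ?thesis
  proof (rule ccontr)
    assume "A_set \<theta> \<noteq> {}"
    then obtain n where n: "n \<in> A_set (exp (2 / l))" using assms(5) by auto
    then have "n \<ge> 1" by (simp add: A_set_def)
    obtain q :: int where q: "real n * l < q" "real n * (q - real n * l) \<le> 1 / (3 * l)"
      using A_set_approximation[OF _ n] l_gt a0 by auto
    have "1 / (3 * real (a 0)) \<le> real n * (q - real n * l)"
      using even_tail_approximation[OF pos _ tails, of n 0 q] \<open>n \<ge> 1\<close> q(1) a0
      by (simp add: assms(4) cf_tail_0)
    moreover have "1 / (3 * l) < 1 / (3 * real (a 0))" using l_gt a0 by (simp add: frac_less2)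
    ultimately show False using q(2) by linarith
  qed
qed

end
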